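(* For $n=4$: $\mathbb{O}_{4,0}\simeq\mathbb{O}_{2,2}$ and $\mathbb{O}_{3,1}\simeq\mathbb{O}_{1,3}$ (as graded algebras).
   Context: $\mathbb{Z}_2=\{0,1\}$. For $p+q=n\ge3$, $\mathbb{O}_{p,q}$ is the real algebra with basis $\{u_x: x\in\mathbb{Z}_2^n\}$ and product $u_x\cdot u_y=(-1)^{f(x,y)}u_{x+y}$, where $f(x,y)=\sum_{1\le i<j<k\le n}(x_ix_jy_k+x_iy_jx_k+y_ix_jx_k)+\sum_{1\le i\le j\le n}x_iy_j+\sum_{1\le i\le p}x_iy_i$. A graded isomorphism is an algebra isomorphism sending each homogeneous element (scalar multiple of some $u_x$) to a homogeneous element. *)

theory Defs
  imports Complex_Main
begin

text \<open>Elements of Z_2^n are boolean lists of length n; coordinate i (1-based in the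
paper) is x ! (i-1). Elements of O_{p,q} are real coefficient functions on
Z_2^n (zero outside Z_2^n); u_x is the indicator of x.\<close>

definition Zn :: "nat \<Rightarrow> bool list set" where
  "Zn n = {x. length x = n}"

definition vadd :: "bool list \<Rightarrow> bool list \<Rightarrow> bool list" where
  "vadd x y = map2 (\<noteq>) x y"

definition bi :: "bool \<Rightarrow> nat" where
  "bi b = (if b then 1 else 0)"

definition ftw :: "nat \<Rightarrow> nat \<Rightarrow> bool list \<Rightarrow> bool list \<Rightarrow> nat" where
  "ftw p n x y =
     (\<Sum>k<n. \<Sum>j<k. \<Sum>i<j.
        bi (x!i) * bi (x!j) * bi (y!k) + bi (x!i) * bi (y!j) * bi (x!k)
        + bi (y!i) * bi (x!j) * bi (x!k))
   + (\<Sum>j<n. \<Sum>i\<le>j. bi (x!i) * bi (y!j))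
   + (\<Sum>i<p. bi (x!i) * bi (y!i))"

definition Ocarrier :: "nat \<Rightarrow> (bool list \<Rightarrow> real) set" where
  "Ocarrier n = {a. \<forall>x. x \<notin> Zn n \<longrightarrow> a x = 0}"

definition ubasis :: "nat \<Rightarrow> bool list \<Rightarrow> bool list \<Rightarrow> real" where
  "ubasis n x = (\<lambda>z. if z = x then 1 else 0)"

text \<open>Product of O_{p,q}: bilinear extension of u_x u_y = (-1)^f(x,y) u_{x+y}.\<close>
definition Omult :: "nat \<Rightarrow> nat \<Rightarrow> (bool list \<Rightarrow> real) \<Rightarrow> (bool list \<Rightarrow> real) \<Rightarrow> bool list \<Rightarrow> real" where
  "Omult p q a b = (\<lambda>z. if z \<in> Zn (p+q) then
       (\<Sum>x\<in>Zn (p+q). (-1) ^ ftw p (p+q) x (vadd x z) * a x * b (vadd x z))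
     else 0)"

definition homogeneous :: "nat \<Rightarrow> (bool list \<Rightarrow> real) \<Rightarrow> bool" where
  "homogeneous n a \<longleftrightarrow> (\<exists>x\<in>Zn n. \<exists>c::real. a = (\<lambda>z. c * ubasis n x z))"

definition graded_iso :: "nat \<Rightarrow> nat \<Rightarrow> nat \<Rightarrow> nat \<Rightarrow>
    ((bool list \<Rightarrow> real) \<Rightarrow> (bool list \<Rightarrow> real)) \<Rightarrow> bool" where
  "graded_iso p q p' q' \<phi> \<longleftrightarrow>
     p + q = p' + q' \<and>
     bij_betw \<phi> (Ocarrier (p+q)) (Ocarrier (p'+q')) \<and>
     (\<forall>a\<in>Ocarrier (p+q). \<forall>b\<in>Ocarrier (p+q). \<phi> (\<lambda>z. a z + b z) = (\<lambda>z. \<phi> a z + \<phi> b z)) \<and>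
     (\<forall>a\<in>Ocarrier (p+q). \<forall>c::real. \<phi> (\<lambda>z. c * a z) = (\<lambda>z. c * \<phi> a z)) \<and>
     (\<forall>a\<in>Ocarrier (p+q). \<forall>b\<in>Ocarrier (p+q). \<phi> (Omult p q a b) = Omult p' q' (\<phi> a) (\<phi> b)) \<and>
     (\<forall>a\<in>Ocarrier (p+q). homogeneous (p+q) a \<longrightarrow> homogeneous (p'+q') (\<phi> a))"

definition graded_isomorphic :: "nat \<Rightarrow> nat \<Rightarrow> nat \<Rightarrow> nat \<Rightarrow> bool" where
  "graded_isomorphic p q p' q' \<longleftrightarrow> (\<exists>\<phi>. graded_iso p q p' q' \<phi>)"

end

theory Submission
  imports Defs
begin

text \<open>
  For a linear automorphism \<open>\<sigma>\<close> of \<open>\<int>\<^sub>2\<^sup>n\<close> and signs \<open>s : \<int>\<^sub>2\<^sup>n \<rightarrow> \<int>\<^sub>2\<close>, the linear map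
  \<open>u\<^sub>x \<mapsto> (-1)\<^bsup>s(x)\<^esup> u\<^bsub>\<sigma>(x)\<^esub>\<close> is bijective and preserves homogeneous elements; it is
  multiplicative from \<open>O(p,q)\<close> to \<open>O(p',q')\<close> provided the twisting functions differ by the
  coboundary of \<open>s\<close>, i.e. \<open>f'(\<sigma> x, \<sigma> y) = f(x,y) + s(x) + s(y) + s(x+y)\<close> mod 2.
  For \<open>n = 4\<close> suitable \<open>\<sigma>\<close> and \<open>s\<close> are written down explicitly, and the coboundary
  condition is checked by evaluation on all 256 pairs.
\<close>

lemma Zn_eq_set_n_lists: "Zn n = set (List.n_lists n [False, True])"
  by (auto simp: Zn_def set_n_lists)

lemma vadd_in_Zn: "x \<in> Zn n \<Longrightarrow> y \<in> Zn n \<Longrightarrow> vadd x y \<in> Zn n"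
  by (simp add: Zn_def vadd_def)

lemma vadd_vadd_cancel: "x \<in> Zn n \<Longrightarrow> y \<in> Zn n \<Longrightarrow> vadd x (vadd x y) = y"
  unfolding Zn_def vadd_def by (auto intro!: nth_equalityI)

lemma minus_one_power_coboundary:
  fixes a b c d e :: nat
  assumes "even (a + b + c + d + e)"
  shows "(-1::real) ^ a * (-1) ^ c * (-1) ^ d = (-1) ^ e * (-1) ^ b"
  using assms by (auto simp: minus_one_power_iff power_add[symmetric])

definition twists_cohomologous ::
    "nat \<Rightarrow> nat \<Rightarrow> nat \<Rightarrow> (bool list \<Rightarrow> bool list) \<Rightarrow> (bool list \<Rightarrow> bool) \<Rightarrow> bool"
  where "twists_cohomologous p p' n \<sigma> s \<longleftrightarrow> (\<forall>x\<in>Zn n. \<forall>y\<in>Zn n.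
    even (ftw p' n (\<sigma> x) (\<sigma> y) + ftw p n x y + bi (s x) + bi (s y) + bi (s (vadd x y))))"

definition relabel ::
    "nat \<Rightarrow> (bool list \<Rightarrow> bool list) \<Rightarrow> (bool list \<Rightarrow> bool) \<Rightarrow> (bool list \<Rightarrow> real) \<Rightarrow> bool list \<Rightarrow> real"
  where "relabel n \<sigma> s a z =
    (if z \<in> Zn n then (-1) ^ bi (s (inv_into (Zn n) \<sigma> z)) * a (inv_into (Zn n) \<sigma> z) else 0)"

context
  fixes n :: nat and \<sigma> :: "bool list \<Rightarrow> bool list" and s :: "bool list \<Rightarrow> bool"
  assumes bij: "bij_betw \<sigma> (Zn n) (Zn n)"
begin

lemma relabel_apply: "x \<in> Zn n \<Longrightarrow> relabel n \<sigma> s a (\<sigma> x) = (-1) ^ bi (s x) * a x"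
  using bij by (simp add: relabel_def bij_betw_apply bij_betw_inv_into_left)

lemma relabel_cases:
  obtains w where "w \<in> Zn n" "z = \<sigma> w" | "z \<notin> Zn n" "relabel n \<sigma> s a z = 0"
  using bij by (metis bij_betw_imp_surj_on imageE relabel_def)

lemma relabel_eqI:
  assumes "\<And>x. x \<in> Zn n \<Longrightarrow> b (\<sigma> x) = (-1) ^ bi (s x) * a x" and "b \<in> Ocarrier n"
  shows "relabel n \<sigma> s a = b"
proof
  fix z
  show "relabel n \<sigma> s a z = b z"
    by (cases z rule: relabel_cases[where a = a]) (use assms in \<open>auto simp: relabel_apply Ocarrier_def\<close>)
qed

lemma bij_betw_relabel: "bij_betw (relabel n \<sigma> s) (Ocarrier n) (Ocarrier n)"
proof (rule bij_betw_byWitness[where f' = "\<lambda>b x. if x \<in> Zn n then (-1) ^ bi (s x) * b (\<sigma> x) else 0"])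
  have sign_sq: "(-1::real) ^ bi b * (-1) ^ bi b = 1" for b
    by (simp add: power_add[symmetric])
  show "\<forall>a\<in>Ocarrier n. (\<lambda>x. if x \<in> Zn n then (-1) ^ bi (s x) * relabel n \<sigma> s a (\<sigma> x) else 0) = a"
    by (auto simp: relabel_apply sign_sq mult.assoc[symmetric] Ocarrier_def)
  show "\<forall>b\<in>Ocarrier n. relabel n \<sigma> s (\<lambda>x. if x \<in> Zn n then (-1) ^ bi (s x) * b (\<sigma> x) else 0) = b"
    using bij by (auto intro!: relabel_eqI simp: sign_sq mult.assoc[symmetric] bij_betw_apply)
qed (auto simp: relabel_def Ocarrier_def)

lemma homogeneous_relabel:
  assumes "homogeneous n a"
  shows "homogeneous n (relabel n \<sigma> s a)"
proof -
  obtain x c where x: "x \<in> Zn n" and a: "a = (\<lambda>z. c * ubasis n x z)"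
    using assms unfolding homogeneous_def by blast
  have "relabel n \<sigma> s a = (\<lambda>z. ((-1) ^ bi (s x) * c) * ubasis n (\<sigma> x) z)"
    using x bij_betw_apply[OF bij] by (intro relabel_eqI)
      (auto simp: a ubasis_def Ocarrier_def dest: inj_onD[OF bij_betw_imp_inj_on[OF bij]])
  then show ?thesis
    using x bij unfolding homogeneous_def by (blast intro: bij_betw_apply)
qed

lemma relabel_Omult:
  assumes dims: "p + q = n" "p' + q' = n"
    and lin: "\<forall>x\<in>Zn n. \<forall>y\<in>Zn n. \<sigma> (vadd x y) = vadd (\<sigma> x) (\<sigma> y)"
    and coboundary: "twists_cohomologous p p' n \<sigma> s"
  shows "relabel n \<sigma> s (Omult p q a b) = Omult p' q' (relabel n \<sigma> s a) (relabel n \<sigma> s b)"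
proof (rule relabel_eqI)
  show "Omult p' q' (relabel n \<sigma> s a) (relabel n \<sigma> s b) \<in> Ocarrier n"
    using dims by (simp add: Omult_def Ocarrier_def)
next
  fix w assume w: "w \<in> Zn n"
  have "Omult p' q' (relabel n \<sigma> s a) (relabel n \<sigma> s b) (\<sigma> w) =
      (\<Sum>x'\<in>Zn n. (-1) ^ ftw p' n x' (vadd x' (\<sigma> w))
                  * relabel n \<sigma> s a x' * relabel n \<sigma> s b (vadd x' (\<sigma> w)))"
    using dims w bij by (simp add: Omult_def bij_betw_apply)
  also have "\<dots> = (\<Sum>x\<in>Zn n. (-1) ^ ftw p' n (\<sigma> x) (vadd (\<sigma> x) (\<sigma> w))
                  * relabel n \<sigma> s a (\<sigma> x) * relabel n \<sigma> s b (vadd (\<sigma> x) (\<sigma> w)))"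
    by (rule sum.reindex_bij_betw[OF bij, symmetric])
  also have "\<dots> = (\<Sum>x\<in>Zn n. (-1) ^ bi (s w) * ((-1) ^ ftw p n x (vadd x w) * a x * b (vadd x w)))"
  proof (rule sum.cong[OF refl])
    fix x assume x: "x \<in> Zn n"
    have xw: "vadd x w \<in> Zn n" and "vadd x (vadd x w) = w"
      using x w by (simp_all add: vadd_in_Zn vadd_vadd_cancel)
    then have sign: "(-1::real) ^ ftw p' n (\<sigma> x) (\<sigma> (vadd x w)) * (-1) ^ bi (s x) * (-1) ^ bi (s (vadd x w))
        = (-1) ^ bi (s w) * (-1) ^ ftw p n x (vadd x w)"
      using coboundary x unfolding twists_cohomologous_def by (metis minus_one_power_coboundary)
    have "vadd (\<sigma> x) (\<sigma> w) = \<sigma> (vadd x w)"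
      using lin x w by simp
    then have "(-1) ^ ftw p' n (\<sigma> x) (vadd (\<sigma> x) (\<sigma> w)) * relabel n \<sigma> s a (\<sigma> x)
          * relabel n \<sigma> s b (vadd (\<sigma> x) (\<sigma> w))
        = ((-1) ^ ftw p' n (\<sigma> x) (\<sigma> (vadd x w)) * (-1) ^ bi (s x) * (-1) ^ bi (s (vadd x w)))
          * a x * b (vadd x w)"
      using x xw by (simp add: relabel_apply mult_ac)
    also have "\<dots> = (-1) ^ bi (s w) * ((-1) ^ ftw p n x (vadd x w) * a x * b (vadd x w))"
      unfolding sign by (simp add: mult_ac)
    finally show "(-1) ^ ftw p' n (\<sigma> x) (vadd (\<sigma> x) (\<sigma> w)) * relabel n \<sigma> s a (\<sigma> x)
          * relabel n \<sigma> s b (vadd (\<sigma> x) (\<sigma> w))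
        = (-1) ^ bi (s w) * ((-1) ^ ftw p n x (vadd x w) * a x * b (vadd x w))" .
  qed
  also have "\<dots> = (-1) ^ bi (s w) * Omult p q a b w"
    using dims w by (simp add: Omult_def sum_distrib_left)
  finally show "Omult p' q' (relabel n \<sigma> s a) (relabel n \<sigma> s b) (\<sigma> w) = (-1) ^ bi (s w) * Omult p q a b w" .
qed

lemma graded_isomorphic_by_relabel:
  assumes "p + q = n" "p' + q' = n"
    and "\<forall>x\<in>Zn n. \<forall>y\<in>Zn n. \<sigma> (vadd x y) = vadd (\<sigma> x) (\<sigma> y)"
    and "twists_cohomologous p p' n \<sigma> s"
  shows "graded_isomorphic p q p' q'"
proof -
  have "relabel n \<sigma> s (\<lambda>z. a z + b z) = (\<lambda>z. relabel n \<sigma> s a z + relabel n \<sigma> s b z)" for a b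
    by (auto simp: relabel_def distrib_left)
  moreover have "relabel n \<sigma> s (\<lambda>z. c * a z) = (\<lambda>z. c * relabel n \<sigma> s a z)" for c a
    by (auto simp: relabel_def)
  ultimately have "graded_iso p q p' q' (relabel n \<sigma> s)"
    using assms by (simp add: graded_iso_def bij_betw_relabel relabel_Omult homogeneous_relabel)
  then show ?thesis
    unfolding graded_isomorphic_def by blast
qed

end

definition relabel_O40_O22 :: "bool list \<Rightarrow> bool list" where
  "relabel_O40_O22 x = [x!3, (x!0 \<noteq> x!1) \<noteq> x!2, x!2, x!1]"

definition sign_O40_O22 :: "bool list \<Rightarrow> bool" where
  "sign_O40_O22 x = (x \<in> set [[True, False, False, True], [False, True, True, False],
     [True, True, True, False], [True, True, False, True], [True, False, True, True],
     [False, True, True, True]])"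

definition relabel_O31_O13 :: "bool list \<Rightarrow> bool list" where
  "relabel_O31_O13 x = [(x!0 \<noteq> x!1) \<noteq> x!2, x!3, x!2, x!1]"

definition sign_O31_O13 :: "bool list \<Rightarrow> bool" where
  "sign_O31_O13 x = (x \<in> set [[False, False, True, True], [False, True, False, True],
     [False, True, True, False], [False, True, True, True], [True, False, True, True],
     [True, True, False, True], [True, True, True, False], [True, True, True, True]])"

theorem mainTheorem5:
  shows "graded_isomorphic 4 0 2 2 \<and> graded_isomorphic 3 1 1 3"
proof
  show "graded_isomorphic 4 0 2 2"
    by (rule graded_isomorphic_by_relabel[where n = 4 and \<sigma> = relabel_O40_O22 and s = sign_O40_O22])
      (unfold twists_cohomologous_def Zn_eq_set_n_lists, code_simp+)
  show "graded_isomorphic 3 1 1 3"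
    by (rule graded_isomorphic_by_relabel[where n = 4 and \<sigma> = relabel_O31_O13 and s = sign_O31_O13])
      (unfold twists_cohomologous_def Zn_eq_set_n_lists, code_simp+)
qed

end
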